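(* Let $(X,d)$ be a complete metric space and let $\{T_i\}_{i\in\mathbb{N}}$ be a sequence of maps $T_i:X\to X$ having a compact invariant set $C\subseteq X$ (i.e., $T_i(C)\subseteq C$ for all $i$), where each $T_i$ is Lipschitz with Lipschitz constant $s_i$. If $\sum_{k=1}^\infty\prod_{i=1}^k s_i<\infty$, then for every $x\in C$ the backward trajectory $\Psi_k(x)$, where $\Psi_k=T_1\circ T_2\circ\cdots\circ T_k$, converges as $k\to\infty$, and the limit is a point of $C$ which is the same for all starting points $x\in C$. *)

theory Defs
  imports "HOL-Analysis.Analysis"
begin

fun Psi :: "(nat \<Rightarrow> 'a \<Rightarrow> 'a) \<Rightarrow> nat \<Rightarrow> 'a \<Rightarrow> 'a" where
  "Psi T 0 = id"
| "Psi T (Suc k) = Psi T k \<circ> T (Suc k)"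

end

theory Submission
  imports Defs
begin

text \<open>Psi k is Lipschitz on C with constant P k = s 1 * ... * s k, so orbit points
  Psi k x and Psi k y of x, y in C are at most P k * diam C apart. Taking y = T (k+1) x
  bounds the consecutive steps Psi k x, Psi (k+1) x by a summable sequence, so every
  backward orbit is Cauchy and converges in C; and since P k tends to 0, the orbits of
  different starting points share their limit.\<close>

lemma Cauchy_if_summable_dist_Suc:
  fixes f :: "nat \<Rightarrow> 'a::metric_space"
  assumes dist_le: "\<And>k. dist (f k) (f (Suc k)) \<le> a k" and "summable a"
  shows "Cauchy f"
proof (rule metric_CauchyI)
  have dist_le_sum: "dist (f m) (f n) \<le> sum a {m..<n}" if "m \<le> n" for m n
    using that
  proof (induction n rule: dec_induct)
    case (step n)
    have "dist (f m) (f (Suc n)) \<le> dist (f m) (f n) + dist (f n) (f (Suc n))"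
      by (rule dist_triangle)
    also have "\<dots> \<le> sum a {m..<n} + a n" using step dist_le by (meson add_mono)
    also have "\<dots> = sum a {m..<Suc n}" using step by simp
    finally show ?case .
  qed simp
  fix e :: real assume "e > 0"
  then obtain N where N: "\<And>m n. m \<ge> N \<Longrightarrow> norm (sum a {m..<n}) < e"
    using \<open>summable a\<close> unfolding summable_Cauchy by blast
  have "dist (f m) (f n) < e" if "N \<le> m" "m \<le> n" for m n
    using dist_le_sum[OF that(2)] N[OF that(1), of n] by simp
  then have "dist (f m) (f n) < e" if "m \<ge> N" "n \<ge> N" for m n
    using that by (metis dist_commute nle_le)
  then show "\<exists>M. \<forall>m\<ge>M. \<forall>n\<ge>M. dist (f m) (f n) < e" by blast
qed

lemma Psi_in:
  assumes "\<And>i. i \<ge> 1 \<Longrightarrow> T i ` C \<subseteq> C" and "x \<in> C"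
  shows "Psi T k x \<in> C"
  using assms(2)
proof (induction k arbitrary: x)
  case (Suc k)
  then have "T (Suc k) x \<in> C" using assms(1)[of "Suc k"] by auto
  then show ?case using Suc.IH by simp
qed simp

lemma lipschitz_on_Psi:
  assumes invariant: "\<And>i. i \<ge> 1 \<Longrightarrow> T i ` C \<subseteq> C"
    and lipschitz: "\<And>i. i \<ge> 1 \<Longrightarrow> lipschitz_on (s i) C (T i)"
  shows "lipschitz_on (\<Prod>i=1..k. s i) C (Psi T k)"
proof (induction k)
  case 0
  show ?case by (simp add: id_def lipschitz_on_id)
next
  case (Suc k)
  have "lipschitz_on (\<Prod>i=1..k. s i) (T (Suc k) ` C) (Psi T k)"
    using Suc.IH invariant[of "Suc k"] by (auto intro: lipschitz_on_subset)
  then have "lipschitz_on ((\<Prod>i=1..k. s i) * s (Suc k)) C (Psi T k \<circ> T (Suc k))"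
    using lipschitz_on_compose[OF lipschitz[of "Suc k"]] by simp
  then show ?case by (simp add: prod.nat_ivl_Suc' mult.commute)
qed

lemma dist_Psi_le_diameter:
  assumes "\<And>i. i \<ge> 1 \<Longrightarrow> T i ` C \<subseteq> C"
    and "\<And>i. i \<ge> 1 \<Longrightarrow> lipschitz_on (s i) C (T i)"
    and "bounded C" and "x \<in> C" and "y \<in> C"
  shows "dist (Psi T k x) (Psi T k y) \<le> (\<Prod>i=1..k. s i) * diameter C"
proof -
  have lip: "lipschitz_on (\<Prod>i=1..k. s i) C (Psi T k)"
    using lipschitz_on_Psi assms(1,2) by blast
  have "dist (Psi T k x) (Psi T k y) \<le> (\<Prod>i=1..k. s i) * dist x y"
    using lipschitz_onD[OF lip] assms(4,5) .
  also have "\<dots> \<le> (\<Prod>i=1..k. s i) * diameter C"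
    using diameter_bounded_bound[OF assms(3-5)] lipschitz_on_nonneg[OF lip]
    by (rule mult_left_mono)
  finally show ?thesis .
qed

lemma Psi_tendsto_in:
  assumes invariant: "\<And>i. i \<ge> 1 \<Longrightarrow> T i ` C \<subseteq> C"
    and lipschitz: "\<And>i. i \<ge> 1 \<Longrightarrow> lipschitz_on (s i) C (T i)"
    and "complete C" "bounded C" "summable (\<lambda>k. \<Prod>i=1..k. s i)" "x \<in> C"
  shows "\<exists>p\<in>C. (\<lambda>k. Psi T k x) \<longlonglongrightarrow> p"
proof -
  have Cauchy: "Cauchy (\<lambda>k. Psi T k x)"
  proof (rule Cauchy_if_summable_dist_Suc)
    fix k
    have "T (Suc k) x \<in> C" using invariant[of "Suc k"] \<open>x \<in> C\<close> by auto
    then show "dist (Psi T k x) (Psi T (Suc k) x) \<le> (\<Prod>i=1..k. s i) * diameter C"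
      using dist_Psi_le_diameter[where T = T, OF invariant lipschitz \<open>bounded C\<close> \<open>x \<in> C\<close>] by simp
  qed (use \<open>summable _\<close> summable_mult2 in blast)
  have orbit_in: "Psi T k x \<in> C" for k
    by (rule Psi_in) (use invariant \<open>x \<in> C\<close> in auto)
  obtain p where "p \<in> C" "(\<lambda>k. Psi T k x) \<longlonglongrightarrow> p"
    by (rule completeE[OF \<open>complete C\<close>, of "\<lambda>k. Psi T k x"]) (use orbit_in Cauchy in auto)
  then show ?thesis by blast
qed

lemma dist_Psi_tendsto_zero:
  assumes "\<And>i. i \<ge> 1 \<Longrightarrow> T i ` C \<subseteq> C"
    and "\<And>i. i \<ge> 1 \<Longrightarrow> lipschitz_on (s i) C (T i)"
    and "bounded C" "summable (\<lambda>k. \<Prod>i=1..k. s i)" "x \<in> C" "y \<in> C"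
  shows "(\<lambda>k. dist (Psi T k x) (Psi T k y)) \<longlonglongrightarrow> 0"
proof (rule Lim_null_comparison)
  show "(\<lambda>k. (\<Prod>i=1..k. s i) * diameter C) \<longlonglongrightarrow> 0"
    using summable_LIMSEQ_zero[OF summable_mult2[OF assms(4)]] .
  show "\<forall>\<^sub>F k in sequentially. norm (dist (Psi T k x) (Psi T k y)) \<le> (\<Prod>i=1..k. s i) * diameter C"
    using dist_Psi_le_diameter[where T = T, OF assms(1-3,5,6)] by simp
qed

theorem mainTheorem4:
  fixes T :: "nat \<Rightarrow> 'a::complete_space \<Rightarrow> 'a" and s :: "nat \<Rightarrow> real" and C :: "'a set"
  assumes "compact C"
    and "\<And>i. i \<ge> 1 \<Longrightarrow> T i ` C \<subseteq> C"
    and "\<And>i. i \<ge> 1 \<Longrightarrow> lipschitz_on (s i) UNIV (T i)"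
    and "summable (\<lambda>k. \<Prod>i=1..k. s i)"
  shows "(\<forall>x\<in>C. \<exists>p\<in>C. (\<lambda>k. Psi T k x) \<longlonglongrightarrow> p)
         \<and> (\<forall>x\<in>C. \<forall>y\<in>C. lim (\<lambda>k. Psi T k x) = lim (\<lambda>k. Psi T k y))"
proof -
  have lipschitz: "lipschitz_on (s i) C (T i)" if "i \<ge> 1" for i
    using assms(3)[OF that] by (rule lipschitz_on_subset) simp
  have "complete C" "bounded C"
    using \<open>compact C\<close> compact_imp_complete compact_imp_bounded by auto
  have tendsto: "\<exists>p\<in>C. (\<lambda>k. Psi T k x) \<longlonglongrightarrow> p" if "x \<in> C" for x
    by (rule Psi_tendsto_in[of T C s])
      (use assms(2,4) lipschitz \<open>complete C\<close> \<open>bounded C\<close> that in auto)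
  have "lim (\<lambda>k. Psi T k x) = lim (\<lambda>k. Psi T k y)" if x: "x \<in> C" and y: "y \<in> C" for x y
  proof -
    obtain p q where p: "(\<lambda>k. Psi T k x) \<longlonglongrightarrow> p" and q: "(\<lambda>k. Psi T k y) \<longlonglongrightarrow> q"
      using tendsto[OF x] tendsto[OF y] by blast
    have "(\<lambda>k. dist (Psi T k x) (Psi T k y)) \<longlonglongrightarrow> dist p q"
      using tendsto_dist[OF p q] .
    then have "dist p q = 0"
      using dist_Psi_tendsto_zero[where T = T, OF assms(2) lipschitz \<open>bounded C\<close> assms(4) x y]
      by (rule LIMSEQ_unique)
    then show ?thesis using p q limI by auto
  qed
  then show ?thesis using tendsto by blast
qed

end
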